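(* Let $(\Gamma,\psi)$ be an $H$-asymptotic couple with asymptotic integration, and let $\Psi=\psi(\Gamma\setminus\{0\})$. Then the sets $\Psi$ and $\Psi^{\downarrow}$ are jammed.
   Context: An asymptotic couple is a pair $(\Gamma,\psi)$ with $\Gamma$ an ordered abelian group and $\psi:\Gamma\setminus\{0\}\to\Gamma$ such that for all nonzero $\alpha,\beta$: $\alpha+\beta\ne0\Rightarrow\psi(\alpha+\beta)\ge\min(\psi(\alpha),\psi(\beta))$; $\psi(k\alpha)=\psi(\alpha)$ for $k\in\mathbb{Z}\setminus\{0\}$; $\alpha>0\Rightarrow\alpha+\psi(\alpha)>\psi(\beta)$. $H$-asymptotic: $0<\alpha\le\beta\Rightarrow\psi(\alpha)\ge\psi(\beta)$. Asymptotic integration: every $\alpha\in\Gamma$ equals $\gamma+\psi(\gamma)$ for some $\gamma\ne0$. $\Psi^{\downarrow}=\{\delta\in\Gamma:\delta\le\sigma\text{ for some }\sigma\in\Psi\}$. A set $S\subseteq\Gamma$ is jammed if $S\ne\emptyset$, $S$ has no greatest element, and for every convex subgroup $\Delta\ne\{0\}$ of $\Gamma$ there is $\gamma_0\in S$ such that $\gamma_1-\gamma_0\in\Delta$ for every $\gamma_1\in S$ with $\gamma_1>\gamma_0$. *)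

theory Defs
  imports Main
begin

text \<open>Gamma is a (totally) ordered abelian group, modelled by the type class
  linordered_ab_group_add. psi is a total function whose value at 0 is irrelevant.\<close>

definition zmult :: "int \<Rightarrow> 'a::ab_group_add \<Rightarrow> 'a" where
  "zmult k a = (if 0 \<le> k then ((plus a) ^^ nat k) 0 else - (((plus a) ^^ nat (- k)) 0))"

definition asymptotic_couple :: "('a::linordered_ab_group_add \<Rightarrow> 'a) \<Rightarrow> bool" where
  "asymptotic_couple psi \<longleftrightarrow>
     (\<forall>a b. a \<noteq> 0 \<and> b \<noteq> 0 \<and> a + b \<noteq> 0 \<longrightarrow> psi (a + b) \<ge> min (psi a) (psi b)) \<and>
     (\<forall>a k. a \<noteq> 0 \<and> k \<noteq> 0 \<longrightarrow> psi (zmult k a) = psi a) \<and>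
     (\<forall>a b. a > 0 \<and> b \<noteq> 0 \<longrightarrow> a + psi a > psi b)"

definition H_asymptotic :: "('a::linordered_ab_group_add \<Rightarrow> 'a) \<Rightarrow> bool" where
  "H_asymptotic psi \<longleftrightarrow> (\<forall>a b. 0 < a \<and> a \<le> b \<longrightarrow> psi a \<ge> psi b)"

definition asymptotic_integration :: "('a::linordered_ab_group_add \<Rightarrow> 'a) \<Rightarrow> bool" where
  "asymptotic_integration psi \<longleftrightarrow> (\<forall>a. \<exists>g. g \<noteq> 0 \<and> a = g + psi g)"

definition PsiSet :: "('a::linordered_ab_group_add \<Rightarrow> 'a) \<Rightarrow> 'a set" where
  "PsiSet psi = psi ` {g. g \<noteq> 0}"

definition down_closure :: "'a::linorder set \<Rightarrow> 'a set" where
  "down_closure S = {d. \<exists>s\<in>S. d \<le> s}"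

definition convex_subgroup :: "'a::linordered_ab_group_add set \<Rightarrow> bool" where
  "convex_subgroup D \<longleftrightarrow> 0 \<in> D \<and> (\<forall>x\<in>D. \<forall>y\<in>D. x + y \<in> D) \<and> (\<forall>x\<in>D. - x \<in> D) \<and>
     (\<forall>x y z. x \<in> D \<and> z \<in> D \<and> x \<le> y \<and> y \<le> z \<longrightarrow> y \<in> D)"

definition jammed :: "'a::linordered_ab_group_add set \<Rightarrow> bool" where
  "jammed S \<longleftrightarrow> S \<noteq> {} \<and> \<not> (\<exists>m\<in>S. \<forall>s\<in>S. s \<le> m) \<and>
     (\<forall>D. convex_subgroup D \<and> D \<noteq> {0} \<longrightarrow>
        (\<exists>g0\<in>S. \<forall>g1\<in>S. g1 > g0 \<longrightarrow> g1 - g0 \<in> D))"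

end

theory Submission
  imports Defs
begin

text \<open>By the third axiom, every element of \<open>\<Psi>\<down>\<close> lies strictly below \<open>d + \<psi>(d)\<close> for any
  \<open>d > 0\<close>; so given a nontrivial convex subgroup, choosing a positive \<open>d\<close> in it, the element
  \<open>\<psi>(d)\<close> of \<open>\<Psi>\<close> is within distance \<open>d\<close> of everything above it in \<open>\<Psi>\<down>\<close>. That \<open>\<Psi>\<close> has no
  maximum comes from asymptotic integration: writing \<open>\<psi>(b) = g + \<psi>(g)\<close>, the case \<open>g > 0\<close>
  contradicts the third axiom and the case \<open>g < 0\<close> gives the larger element \<open>\<psi>(g)\<close>.\<close>

lemma convex_subgroup_has_pos:
  fixes D :: "'a::linordered_ab_group_add set"
  assumes "convex_subgroup D" "D \<noteq> {0}"
  shows "\<exists>d\<in>D. 0 < d"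
proof -
  have "0 \<in> D" and uminus: "\<forall>x\<in>D. - x \<in> D"
    using assms(1) unfolding convex_subgroup_def by blast+
  then obtain x where x: "x \<in> D" "x \<noteq> 0" using assms(2) by blast
  show ?thesis
  proof (cases "0 < x")
    case False
    with x have "0 < - x" by (simp add: neg_less_iff_less)
    with x uminus show ?thesis by blast
  qed (use x in blast)
qed

lemma jammedI_uniform_gaps:
  fixes S :: "'a::linordered_ab_group_add set"
  assumes "S \<noteq> {}" "\<And>m. m \<in> S \<Longrightarrow> \<exists>s\<in>S. m < s"
    and gaps: "\<And>d. 0 < d \<Longrightarrow> \<exists>s0\<in>S. \<forall>s\<in>S. s < s0 + d"
  shows "jammed S"
  unfolding jammed_def
proof (intro conjI allI impI)
  show "S \<noteq> {}" by fact
  show "\<not> (\<exists>m\<in>S. \<forall>s\<in>S. s \<le> m)" using assms(2) by (meson leD)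
  fix D :: "'a set"
  assume D: "convex_subgroup D \<and> D \<noteq> {0}"
  then obtain d where d: "d \<in> D" "0 < d" using convex_subgroup_has_pos by blast
  obtain s0 where s0: "s0 \<in> S" "\<forall>s\<in>S. s < s0 + d" using gaps[OF d(2)] by blast
  have "s - s0 \<in> D" if "s \<in> S" "s0 < s" for s
  proof -
    have "0 \<le> s - s0" "s - s0 \<le> d" using that s0 by (auto simp: algebra_simps)
    moreover have "0 \<in> D" using D unfolding convex_subgroup_def by blast
    ultimately show ?thesis using D d(1) unfolding convex_subgroup_def by blast
  qed
  with s0(1) show "\<exists>g0\<in>S. \<forall>g1\<in>S. g0 < g1 \<longrightarrow> g1 - g0 \<in> D" by blast
qed

lemma subset_down_closure: "S \<subseteq> down_closure S"
  unfolding down_closure_def by auto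

lemma down_closure_no_max:
  assumes "\<And>m. m \<in> S \<Longrightarrow> \<exists>s\<in>S. m < s" "m \<in> down_closure S"
  shows "\<exists>s\<in>down_closure S. m < s"
proof -
  obtain t where "t \<in> S" "m \<le> t" using assms(2) unfolding down_closure_def by blast
  with assms(1) subset_down_closure show ?thesis by (meson le_less_trans subsetD)
qed

lemma down_closure_PsiSet_less:
  assumes "asymptotic_couple psi" "0 < d" "g \<in> down_closure (PsiSet psi)"
  shows "g < d + psi d"
proof -
  obtain b where "b \<noteq> 0" "g \<le> psi b"
    using assms(3) unfolding down_closure_def PsiSet_def by blast
  moreover have "psi b < d + psi d"
    using assms(1,2) \<open>b \<noteq> 0\<close> unfolding asymptotic_couple_def by blast
  ultimately show ?thesis by simp
qed

lemma PsiSet_nonempty: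
  assumes "asymptotic_integration psi"
  shows "PsiSet psi \<noteq> {}"
  using assms unfolding asymptotic_integration_def PsiSet_def by blast

lemma PsiSet_no_max:
  assumes "asymptotic_couple psi" "asymptotic_integration psi" "m \<in> PsiSet psi"
  shows "\<exists>s\<in>PsiSet psi. m < s"
proof -
  obtain b where b: "b \<noteq> 0" "m = psi b" using assms(3) unfolding PsiSet_def by blast
  obtain g where g: "g \<noteq> 0" "m = g + psi g"
    using assms(2) unfolding asymptotic_integration_def by blast
  have "\<not> 0 < g"
  proof
    assume "0 < g"
    then have "psi b < g + psi g" using assms(1) b(1) unfolding asymptotic_couple_def by blast
    with b g show False by simp
  qed
  with g have "m < psi g" by (simp add: add_neg_nonpos)
  moreover have "psi g \<in> PsiSet psi" using g(1) unfolding PsiSet_def by blast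
  ultimately show ?thesis by blast
qed

lemma PsiSet_uniform_gaps:
  assumes "asymptotic_couple psi" "0 < d"
  shows "\<exists>s0\<in>PsiSet psi. \<forall>s\<in>down_closure (PsiSet psi). s < s0 + d"
proof -
  have "psi d \<in> PsiSet psi" using assms(2) unfolding PsiSet_def by auto
  with down_closure_PsiSet_less[OF assms] show ?thesis by (metis add.commute)
qed

theorem lemma3p11:
  fixes psi :: "'a::linordered_ab_group_add \<Rightarrow> 'a"
  assumes "asymptotic_couple psi"
    and "H_asymptotic psi"
    and "asymptotic_integration psi"
  shows "jammed (PsiSet psi) \<and> jammed (down_closure (PsiSet psi))"
proof
  note no_max = PsiSet_no_max[OF assms(1,3)]
  note gaps = PsiSet_uniform_gaps[OF assms(1)]
  have ne: "PsiSet psi \<noteq> {}" using PsiSet_nonempty[OF assms(3)] .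
  show "jammed (PsiSet psi)"
  proof (rule jammedI_uniform_gaps[OF ne no_max])
    show "\<exists>s0\<in>PsiSet psi. \<forall>s\<in>PsiSet psi. s < s0 + d" if "0 < d" for d
      using gaps[OF that] subset_down_closure by blast
  qed
  show "jammed (down_closure (PsiSet psi))"
  proof (rule jammedI_uniform_gaps[OF _ down_closure_no_max[OF no_max]])
    show "down_closure (PsiSet psi) \<noteq> {}" using ne subset_down_closure by blast
    show "\<exists>s0\<in>down_closure (PsiSet psi). \<forall>s\<in>down_closure (PsiSet psi). s < s0 + d"
      if "0 < d" for d
      using gaps[OF that] subset_down_closure by blast
  qed
qed

end
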